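(* For all $n$, there is a bijection between $\mathbf{I}_n(120)$ and $S_n(\underline{143}2)$; in particular $|\mathbf{I}_n(120)|=|S_n(\underline{143}2)|$.
   Context: $S_n$ is the set of permutations of $[n]$, and $\mathbf{I}_n$ the set of integer sequences $e_1\dots e_n$ with $0\le e_i<i$. $\mathbf{I}_n(120)$ is the set of $e\in\mathbf{I}_n$ with no $i$ such that $e_{i+2}<e_i<e_{i+1}$. A permutation $\pi$ contains the vincular pattern $\underline{143}2$ if there exist $i$ and $j>i+2$ with $\pi_i<\pi_j<\pi_{i+2}<\pi_{i+1}$; $S_n(\underline{143}2)$ is the set of $\pi\in S_n$ that do not contain it. *)

theory Defs
  imports Main
begin

(* Sequences and permutations are represented as lists, read 1-indexed in the
   paper: the paper's e_i / pi_i is the list entry at position i-1. *)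

definition inv_seqs :: "nat \<Rightarrow> nat list set" where
  "inv_seqs n = {e. length e = n \<and> (\<forall>i<n. e ! i < i + 1)}"

definition inv_seqs_avoid_120 :: "nat \<Rightarrow> nat list set" where
  "inv_seqs_avoid_120 n = {e \<in> inv_seqs n.
     \<not> (\<exists>i. i + 2 < n \<and> e ! (i + 2) < e ! i \<and> e ! i < e ! (i + 1))}"

definition perms :: "nat \<Rightarrow> nat list set" where
  "perms n = {p. length p = n \<and> set p = {1..n}}"

(* containment of the vincular pattern 143-2 (first three entries adjacent) *)
definition contains_v1432 :: "nat list \<Rightarrow> bool" where
  "contains_v1432 p = (\<exists>i j. i + 2 < j \<and> j < length p \<and>
      p ! i < p ! j \<and> p ! j < p ! (i + 2) \<and> p ! (i + 2) < p ! (i + 1))"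

definition perms_avoid_v1432 :: "nat \<Rightarrow> nat list set" where
  "perms_avoid_v1432 n = {p \<in> perms n. \<not> contains_v1432 p}"

end

theory Submission
  imports Defs "HOL-Combinatorics.Multiset_Permutations"
begin

(* Send \<pi> \<in> S_n to the reversed sequence of its right-inversion counts: e_i counts the entries
   to the right of position n + 1 - i that are smaller than \<pi>_{n+1-i}.  This is a bijection
   S_n \<rightarrow> I_n.  For adjacent positions a, a+1, a+2 of \<pi>, with D the entries right of a+2 and
   c v = #{d \<in> D. d < v}, the three corresponding entries of e are
     e_{i+2} = c \<pi>_a + [\<pi>_{a+1} < \<pi>_a] + [\<pi>_{a+2} < \<pi>_a],
     e_{i+1} = c \<pi>_{a+1} + [\<pi>_{a+2} < \<pi>_{a+1}],    e_i = c \<pi>_{a+2},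
   and since c u < c v iff some d \<in> D has u \<le> d < v, the pattern e_{i+2} < e_i < e_{i+1} holds
   iff some entry of D lies strictly between \<pi>_a and \<pi>_{a+2} and \<pi>_{a+2} < \<pi>_{a+1}, i.e. iff
   \<pi> has an occurrence of 143-2 starting at a. *)

lemma card_less_less_iff:
  fixes D :: "'a::linorder set"
  assumes "finite D"
  shows "card {d\<in>D. d < u} < card {d\<in>D. d < v} \<longleftrightarrow> (\<exists>d\<in>D. u \<le> d \<and> d < v)"
proof
  assume "card {d\<in>D. d < u} < card {d\<in>D. d < v}"
  moreover have "card {d\<in>D. d < v} \<le> card {d\<in>D. d < u}"
    if "{d\<in>D. d < v} \<subseteq> {d\<in>D. d < u}"
    using that assms by (intro card_mono) auto
  ultimately show "\<exists>d\<in>D. u \<le> d \<and> d < v" by (force simp: not_less)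
next
  assume "\<exists>d\<in>D. u \<le> d \<and> d < v"
  then obtain d where d: "d \<in> D" "u \<le> d" "d < v" by blast
  then have "{d\<in>D. d < u} \<subseteq> {d\<in>D. d < v}" by (auto intro: less_le_trans less_trans)
  moreover have "d \<in> {d\<in>D. d < v} - {d\<in>D. d < u}" using d by (simp add: not_less)
  ultimately show "card {d\<in>D. d < u} < card {d\<in>D. d < v}"
    using assms by (intro psubset_card_mono) auto
qed

lemma length_filter_less_distinct:
  "distinct xs \<Longrightarrow> length (filter (\<lambda>d. d < v) xs) = card {d\<in>set xs. d < v}"
  by (simp add: distinct_length_filter Collect_conj_eq Int_commute)

lemma vincular_1432_iff_counts:
  fixes x y z :: "'a::linorder"
  assumes dist: "distinct (x # y # z # ds)"
  shows "(\<exists>d\<in>set ds. x < d \<and> d < z \<and> z < y) \<longleftrightarrow>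
    length (filter (\<lambda>d. d < x) (y # z # ds)) < length (filter (\<lambda>d. d < z) ds) \<and>
    length (filter (\<lambda>d. d < z) ds) < length (filter (\<lambda>d. d < y) (z # ds))"
  (is "_ \<longleftrightarrow> ?rank_x < ?rank_z \<and> ?rank_z < ?rank_y")
proof -
  define c where "c v = card {d\<in>set ds. d < v}" for v
  have c_less_iff: "c u < c v \<longleftrightarrow> (\<exists>d\<in>set ds. u \<le> d \<and> d < v)" for u v
    unfolding c_def by (rule card_less_less_iff) simp
  have "distinct ds" "x \<notin> set ds" "x \<noteq> y" "x \<noteq> z" "y \<noteq> z"
    using dist by auto
  then have counts:
    "length (filter (\<lambda>d. d < x) (y # z # ds)) = c x + (if y < x then 1 else 0) + (if z < x then 1 else 0)"
    "length (filter (\<lambda>d. d < z) ds) = c z"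
    "length (filter (\<lambda>d. d < y) (z # ds)) = (if z < y then 1 else 0) + c y"
    by (simp_all add: c_def length_filter_less_distinct)
  show ?thesis
  proof
    assume "\<exists>d\<in>set ds. x < d \<and> d < z \<and> z < y"
    then obtain d where "d \<in> set ds" "x < d" "d < z" "z < y" by blast
    then have "c x < c z" "\<not> c y < c z" using c_less_iff by (auto intro: less_imp_le)
    with \<open>x < d\<close> \<open>d < z\<close> \<open>z < y\<close> show "?rank_x < ?rank_z \<and> ?rank_z < ?rank_y"
      unfolding counts by auto
  next
    assume "?rank_x < ?rank_z \<and> ?rank_z < ?rank_y"
    then have "c x < c z" and zy: "c z < (if z < y then 1 else 0) + c y" unfolding counts by auto
    then obtain d where "d \<in> set ds" "x < d" "d < z"
      using c_less_iff \<open>x \<notin> set ds\<close> by (metis order.order_iff_strict)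
    moreover have "z < y"
    proof (rule ccontr)
      assume "\<not> z < y"
      then have "\<not> c z < c y" using c_less_iff by auto
      with zy \<open>\<not> z < y\<close> show False by simp
    qed
    ultimately show "\<exists>d\<in>set ds. x < d \<and> d < z \<and> z < y" by blast
  qed
qed

definition lehmer :: "nat list \<Rightarrow> nat \<Rightarrow> nat" where
  "lehmer p a = length (filter (\<lambda>y. y < p ! a) (drop (Suc a) p))"

lemma vincular_1432_at_iff_lehmer:
  assumes "distinct p" "a + 2 < length p"
  shows "(\<exists>j. a + 2 < j \<and> j < length p \<and> p ! a < p ! j \<and> p ! j < p ! (a + 2) \<and> p ! (a + 2) < p ! (a + 1))
    \<longleftrightarrow> lehmer p a < lehmer p (a + 2) \<and> lehmer p (a + 2) < lehmer p (a + 1)"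
proof -
  define ds where "ds = drop (a + 3) p"
  have drop2: "drop (Suc (a + 1)) p = p ! (a + 2) # ds"
    using Cons_nth_drop_Suc[of "a + 2" p] assms(2) by (simp add: ds_def numeral_3_eq_3)
  have drop1: "drop (Suc a) p = p ! (a + 1) # p ! (a + 2) # ds"
    using Cons_nth_drop_Suc[of "a + 1" p] assms(2) drop2 by simp
  have "distinct (drop a p)" using assms(1) by simp
  then have dist: "distinct (p ! a # p ! (a + 1) # p ! (a + 2) # ds)"
    using Cons_nth_drop_Suc[of a p] assms(2) drop1 by simp
  have lehmer_eqs:
    "lehmer p a = length (filter (\<lambda>d. d < p ! a) (p ! (a + 1) # p ! (a + 2) # ds))"
    "lehmer p (a + 1) = length (filter (\<lambda>d. d < p ! (a + 1)) (p ! (a + 2) # ds))"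
    "lehmer p (a + 2) = length (filter (\<lambda>d. d < p ! (a + 2)) ds)"
    unfolding lehmer_def using drop1 drop2 by (simp_all add: ds_def numeral_3_eq_3)
  have mem_ds: "d \<in> set ds \<longleftrightarrow> (\<exists>j. a + 2 < j \<and> j < length p \<and> p ! j = d)" for d
  proof
    assume "d \<in> set ds"
    then obtain k where "k < length ds" "ds ! k = d" by (auto simp: in_set_conv_nth)
    then show "\<exists>j. a + 2 < j \<and> j < length p \<and> p ! j = d"
      by (intro exI[of _ "a + 3 + k"]) (auto simp: ds_def)
  next
    assume "\<exists>j. a + 2 < j \<and> j < length p \<and> p ! j = d"
    then obtain j where "a + 2 < j" "j < length p" "p ! j = d" by blast
    then have "ds ! (j - (a + 3)) = d" "j - (a + 3) < length ds" by (auto simp: ds_def)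
    then show "d \<in> set ds" by (metis nth_mem)
  qed
  have "(\<exists>j. a + 2 < j \<and> j < length p \<and> p ! a < p ! j \<and> p ! j < p ! (a + 2) \<and> p ! (a + 2) < p ! (a + 1))
      \<longleftrightarrow> (\<exists>d\<in>set ds. p ! a < d \<and> d < p ! (a + 2) \<and> p ! (a + 2) < p ! (a + 1))"
    unfolding Bex_def mem_ds by auto
  also have "\<dots> \<longleftrightarrow> lehmer p a < lehmer p (a + 2) \<and> lehmer p (a + 2) < lehmer p (a + 1)"
    unfolding lehmer_eqs by (rule vincular_1432_iff_counts[OF dist])
  finally show ?thesis .
qed

lemma contains_v1432_iff_lehmer:
  assumes "distinct p"
  shows "contains_v1432 p \<longleftrightarrow>
    (\<exists>a. a + 2 < length p \<and> lehmer p a < lehmer p (a + 2) \<and> lehmer p (a + 2) < lehmer p (a + 1))"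
proof -
  have "contains_v1432 p \<longleftrightarrow> (\<exists>a. a + 2 < length p \<and>
      (\<exists>j. a + 2 < j \<and> j < length p \<and> p ! a < p ! j \<and> p ! j < p ! (a + 2) \<and> p ! (a + 2) < p ! (a + 1)))"
    unfolding contains_v1432_def by (meson order.strict_trans)
  then show ?thesis using vincular_1432_at_iff_lehmer[OF assms] by blast
qed

definition rev_lehmer_code :: "nat list \<Rightarrow> nat list" where
  "rev_lehmer_code p = rev (map (lehmer p) [0..<length p])"

lemma length_rev_lehmer_code [simp]: "length (rev_lehmer_code p) = length p"
  by (simp add: rev_lehmer_code_def)

lemma rev_lehmer_code_nth:
  "i < length p \<Longrightarrow> rev_lehmer_code p ! i = lehmer p (length p - Suc i)"
  by (simp add: rev_lehmer_code_def rev_nth)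

lemma rev_lehmer_code_Cons:
  "rev_lehmer_code (x # xs) = rev_lehmer_code xs @ [length (filter (\<lambda>y. y < x) xs)]"
proof -
  have "map (lehmer (x # xs)) [0..<length (x # xs)]
        = length (filter (\<lambda>y. y < x) xs) # map (lehmer xs) [0..<length xs]"
    by (simp add: lehmer_def upt_conv_Cons map_Suc_upt[symmetric] del: upt_Suc)
  then show ?thesis by (simp add: rev_lehmer_code_def)
qed

lemma rev_lehmer_code_in_inv_seqs: "rev_lehmer_code p \<in> inv_seqs (length p)"
proof -
  have "lehmer p (length p - Suc i) \<le> i" if "i < length p" for i
  proof -
    have "lehmer p (length p - Suc i) \<le> length (drop (Suc (length p - Suc i)) p)"
      unfolding lehmer_def by (rule length_filter_le)
    also have "\<dots> = i" using that by simp
    finally show ?thesis .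
  qed
  then show ?thesis by (simp add: inv_seqs_def rev_lehmer_code_nth less_Suc_eq_le)
qed

lemma rev_lehmer_code_eqD:
  assumes "distinct p" "distinct q" "set p = set q" "rev_lehmer_code p = rev_lehmer_code q"
  shows "p = q"
  using assms
proof (induction p arbitrary: q)
  case Nil
  then show ?case by simp
next
  case (Cons x xs)
  then obtain y ys where q: "q = y # ys" by (cases q) auto
  let ?S = "set (x # xs)"
  have "length (rev_lehmer_code xs) = length (rev_lehmer_code ys)"
    using Cons.prems(4) q by (metis length_Cons length_rev_lehmer_code nat.inject)
  then have codes: "rev_lehmer_code xs = rev_lehmer_code ys"
    and counts: "length (filter (\<lambda>d. d < x) xs) = length (filter (\<lambda>d. d < y) ys)"
    using Cons.prems(4) q by (auto simp: rev_lehmer_code_Cons)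
  have "{d\<in>?S. d < x} = {d\<in>set xs. d < x}" "{d\<in>?S. d < y} = {d\<in>set ys. d < y}"
    using Cons.prems(3) q by auto
  with counts Cons.prems(1,2) q have same_rank: "card {d\<in>?S. d < x} = card {d\<in>?S. d < y}"
    by (simp add: length_filter_less_distinct)
  have "x \<in> ?S" "y \<in> ?S" using Cons.prems(3) q by auto
  then have "\<not> x < y" "\<not> y < x"
    using same_rank card_less_less_iff[of ?S x y] card_less_less_iff[of ?S y x] by auto
  then have "x = y" by simp
  then have "set xs = set ys" using Cons.prems(1-3) q by auto
  with Cons show ?case using q codes \<open>x = y\<close> by simp
qed

lemma inv_seqs_Suc:
  "inv_seqs (Suc n) = (\<lambda>(e, k). e @ [k]) ` (inv_seqs n \<times> {..n})"
proof
  show "inv_seqs (Suc n) \<subseteq> (\<lambda>(e, k). e @ [k]) ` (inv_seqs n \<times> {..n})"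
  proof
    fix e assume "e \<in> inv_seqs (Suc n)"
    then have len: "length e = Suc n" and bound: "\<forall>i<Suc n. e ! i < i + 1"
      by (auto simp: inv_seqs_def)
    then have "e = butlast e @ [e ! n]"
      by (metis append_butlast_last_id last_conv_nth diff_Suc_1 Suc_neq_Zero list.size(3))
    moreover have "butlast e \<in> inv_seqs n" using len bound by (auto simp: inv_seqs_def nth_butlast)
    moreover have "e ! n \<le> n" using bound by auto
    ultimately show "e \<in> (\<lambda>(e, k). e @ [k]) ` (inv_seqs n \<times> {..n})" by force
  qed
next
  show "(\<lambda>(e, k). e @ [k]) ` (inv_seqs n \<times> {..n}) \<subseteq> inv_seqs (Suc n)"
    by (auto simp: inv_seqs_def nth_append less_Suc_eq)
qed

lemma card_inv_seqs: "card (inv_seqs n) = fact n"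
proof (induction n)
  case 0
  have "inv_seqs 0 = {[]}" by (auto simp: inv_seqs_def)
  then show ?case by simp
next
  case (Suc n)
  have "finite (inv_seqs n)" using Suc by (metis card.infinite fact_nonzero)
  moreover have "inj_on (\<lambda>(e, k). e @ [k]) (inv_seqs n \<times> {..n})"
    by (auto simp: inj_on_def)
  ultimately have "card (inv_seqs (Suc n)) = card (inv_seqs n) * Suc n"
    by (simp add: inv_seqs_Suc card_image card_cartesian_product)
  then show ?case by (simp add: Suc.IH)
qed

lemma perms_eq_permutations_of_set: "perms n = permutations_of_set {1..n}"
proof -
  have "distinct p \<longleftrightarrow> length p = n" if "set p = {1..n}" for p
    using that by (metis card_atLeastAtMost card_distinct diff_Suc_1 distinct_card)
  then show ?thesis unfolding perms_def permutations_of_set_def by auto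
qed

lemma card_perms: "card (perms n) = fact n"
  by (simp add: perms_eq_permutations_of_set)

lemma perms_distinct: "p \<in> perms n \<Longrightarrow> distinct p"
  by (simp add: perms_def card_distinct)

lemma bij_betw_rev_lehmer_code: "bij_betw rev_lehmer_code (perms n) (inv_seqs n)"
proof -
  have inj: "inj_on rev_lehmer_code (perms n)"
  proof (rule inj_onI)
    fix p q assume "p \<in> perms n" "q \<in> perms n" "rev_lehmer_code p = rev_lehmer_code q"
    then show "p = q"
      using perms_distinct rev_lehmer_code_eqD by (simp add: perms_def)
  qed
  have "rev_lehmer_code ` perms n \<subseteq> inv_seqs n"
    using rev_lehmer_code_in_inv_seqs by (auto simp: perms_def)
  moreover have "finite (inv_seqs n)" using card_inv_seqs[of n] by (metis card.infinite fact_nonzero)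
  moreover have "card (rev_lehmer_code ` perms n) = card (inv_seqs n)"
    by (simp add: card_image[OF inj] card_inv_seqs card_perms)
  ultimately have "rev_lehmer_code ` perms n = inv_seqs n" by (simp add: card_subset_eq)
  with inj show ?thesis by (simp add: bij_betw_def)
qed

lemma ex_index_reflect:
  fixes n :: nat
  shows "(\<exists>i. i + 2 < n \<and> P (n - 3 - i)) \<longleftrightarrow> (\<exists>a. a + 2 < n \<and> P a)"
proof
  assume "\<exists>a. a + 2 < n \<and> P a"
  then obtain a where "a + 2 < n" "P a" by blast
  then show "\<exists>i. i + 2 < n \<and> P (n - 3 - i)" by (intro exI[of _ "n - 3 - a"]) auto
next
  assume "\<exists>i. i + 2 < n \<and> P (n - 3 - i)"
  then obtain i where "i + 2 < n" "P (n - 3 - i)" by blast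
  then show "\<exists>a. a + 2 < n \<and> P a" by (intro exI[of _ "n - 3 - i"]) auto
qed

lemma rev_lehmer_code_120_iff:
  "(\<exists>i. i + 2 < length p \<and> rev_lehmer_code p ! (i + 2) < rev_lehmer_code p ! i
        \<and> rev_lehmer_code p ! i < rev_lehmer_code p ! (i + 1))
   \<longleftrightarrow> (\<exists>a. a + 2 < length p \<and> lehmer p a < lehmer p (a + 2) \<and> lehmer p (a + 2) < lehmer p (a + 1))"
  (is "(\<exists>i. i + 2 < length p \<and> ?code_120 i) \<longleftrightarrow> (\<exists>a. a + 2 < length p \<and> ?lehmer_1432 a)")
proof -
  have "?code_120 i \<longleftrightarrow> ?lehmer_1432 (length p - 3 - i)" if "i + 2 < length p" for i
  proof -
    from that have "length p - Suc i = length p - 3 - i + 2"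
      "length p - Suc (i + 1) = length p - 3 - i + 1" "length p - Suc (i + 2) = length p - 3 - i"
      by arith+
    with that show ?thesis by (simp add: rev_lehmer_code_nth conj_commute)
  qed
  then have "(\<exists>i. i + 2 < length p \<and> ?code_120 i)
      \<longleftrightarrow> (\<exists>i. i + 2 < length p \<and> ?lehmer_1432 (length p - 3 - i))" by blast
  also have "\<dots> \<longleftrightarrow> (\<exists>a. a + 2 < length p \<and> ?lehmer_1432 a)"
    by (rule ex_index_reflect)
  finally show ?thesis .
qed

theorem mainTheorem20:
  fixes n :: nat
  shows "(\<exists>f. bij_betw f (inv_seqs_avoid_120 n) (perms_avoid_v1432 n))
         \<and> card (inv_seqs_avoid_120 n) = card (perms_avoid_v1432 n)"
proof -
  have "\<not> contains_v1432 p \<longleftrightarrow>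
      \<not> (\<exists>i. i + 2 < n \<and> rev_lehmer_code p ! (i + 2) < rev_lehmer_code p ! i
           \<and> rev_lehmer_code p ! i < rev_lehmer_code p ! (i + 1))"
    if "p \<in> perms n" for p
    using that perms_distinct[OF that] rev_lehmer_code_120_iff[of p] contains_v1432_iff_lehmer[of p]
    by (simp add: perms_def)
  then have "bij_betw rev_lehmer_code (perms_avoid_v1432 n) (inv_seqs_avoid_120 n)"
    unfolding perms_avoid_v1432_def inv_seqs_avoid_120_def
    by (intro bij_betw_Collect[OF bij_betw_rev_lehmer_code]) simp
  then show ?thesis
    using bij_betw_the_inv_into bij_betw_same_card by metis
qed

end
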